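(* Let $I\subset S$ be a nonzero proper graded ideal. Then there exists a constant $c$ such that $\mathrm{v}(I^k)\ge\alpha(I)k+c$ for all $k\gg0$.
   Context: $S=K[x_1,\dots,x_n]$ is a standard graded polynomial ring over a field $K$, $S_d$ its degree-$d$ component. For a graded ideal $J\subset S$, $\mathrm{v}(J)=\min\{d:\exists f\in S_d\text{ with }(J:f)\in\operatorname{Ass}(J)\}$. $\alpha(I)$ is the least degree of a nonzero homogeneous element of $I$. *)

theory Defs
  imports Main "HOL-Library.Poly_Mapping"
begin

text \<open>Polynomial ring S = K[x_v : v in 'v] with 'v a finite type of variables
  (n = CARD('v)), realised as ('v =>0 nat) =>0 a (monomial exponent vectors to coefficients).\<close>

type_synonym ('v, 'a) mpoly = "('v \<Rightarrow>\<^sub>0 nat) \<Rightarrow>\<^sub>0 'a"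

definition is_ideal :: "'r::comm_ring_1 set \<Rightarrow> bool" where
  "is_ideal I \<longleftrightarrow> 0 \<in> I \<and> (\<forall>a\<in>I. \<forall>b\<in>I. a + b \<in> I) \<and> (\<forall>a\<in>I. \<forall>r. r * a \<in> I)"

definition ideal_gen :: "'r::comm_ring_1 set \<Rightarrow> 'r set" where
  "ideal_gen G = \<Inter> {I. is_ideal I \<and> G \<subseteq> I}"

definition ideal_mult :: "'r::comm_ring_1 set \<Rightarrow> 'r set \<Rightarrow> 'r set" where
  "ideal_mult I J = ideal_gen {a * b | a b. a \<in> I \<and> b \<in> J}"

primrec ideal_pow :: "'r::comm_ring_1 set \<Rightarrow> nat \<Rightarrow> 'r set" where
  "ideal_pow I 0 = UNIV"
| "ideal_pow I (Suc k) = ideal_mult (ideal_pow I k) I"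

definition colon :: "'r::comm_ring_1 set \<Rightarrow> 'r \<Rightarrow> 'r set" where
  "colon J f = {g. g * f \<in> J}"

definition prime_ideal :: "'r::comm_ring_1 set \<Rightarrow> bool" where
  "prime_ideal P \<longleftrightarrow> is_ideal P \<and> P \<noteq> UNIV \<and> (\<forall>a b. a * b \<in> P \<longrightarrow> a \<in> P \<or> b \<in> P)"

definition Ass :: "'r::comm_ring_1 set \<Rightarrow> 'r set set" where
  "Ass J = {P. prime_ideal P \<and> (\<exists>f. P = colon J f)}"

definition mdeg :: "('v \<Rightarrow>\<^sub>0 nat) \<Rightarrow> nat" where
  "mdeg m = sum (Poly_Mapping.lookup m) (Poly_Mapping.keys m)"

definition homogeneous_of :: "nat \<Rightarrow> ('v, 'a::zero) mpoly \<Rightarrow> bool" where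
  "homogeneous_of d f \<longleftrightarrow> (\<forall>m \<in> Poly_Mapping.keys f. mdeg m = d)"

definition Sdeg :: "nat \<Rightarrow> ('v, 'a::zero) mpoly set" where
  "Sdeg d = {f. homogeneous_of d f}"

definition graded_ideal :: "('v, 'a::comm_ring_1) mpoly set \<Rightarrow> bool" where
  "graded_ideal I \<longleftrightarrow> is_ideal I \<and> I = ideal_gen {f \<in> I. \<exists>d. homogeneous_of d f}"

definition vnum :: "('v, 'a::comm_ring_1) mpoly set \<Rightarrow> nat" where
  "vnum J = (LEAST d. \<exists>f \<in> Sdeg d. colon J f \<in> Ass J)"

definition alpha :: "('v, 'a::comm_ring_1) mpoly set \<Rightarrow> nat" where
  "alpha I = (LEAST d. \<exists>f \<in> I. f \<noteq> 0 \<and> f \<in> Sdeg d)"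

end

theory Submission
  imports Defs "HOL-Library.Countable" "HOL-Library.Ramsey"
begin

text \<open>Let \<open>(I\<^sup>k : f)\<close> be prime with \<open>f\<close> homogeneous of degree \<open>d\<close>, and let \<open>g \<in> I\<close> be a nonzero form of
  degree \<open>\<alpha>(I)\<close>. Then \<open>g\<^sup>k \<in> I\<^sup>k \<subseteq> (I\<^sup>k : f)\<close>, so \<open>g \<in> (I\<^sup>k : f)\<close> by primality, i.e. \<open>g f \<in> I\<^sup>k\<close>. As \<open>g f\<close>
  is a nonzero form of degree \<open>\<alpha>(I) + d\<close> and every monomial of an element of \<open>I\<^sup>k\<close> has degree at least
  \<open>\<alpha>(I) k\<close>, we get \<open>d \<ge> \<alpha>(I) (k - 1)\<close>; hence \<open>v(I\<^sup>k) \<ge> \<alpha>(I) k - \<alpha>(I)\<close> for all \<open>k \<ge> 1\<close>.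

  The substance is that \<open>v(I\<^sup>k)\<close> is attained at all: a proper graded ideal \<open>J\<close> has a prime colon
  ideal \<open>(J : f)\<close> with \<open>f\<close> homogeneous. Take \<open>(J : f)\<close> maximal among the colons \<open>(J : g)\<close> by homogeneous
  \<open>g \<notin> J\<close>; it is prime on homogeneous elements, and for graded ideals this suffices. The maximal element
  exists because graded ideals satisfy the ascending chain condition, proved via leading monomials
  and Dickson's lemma, which in turn follows from Ramsey's theorem.\<close>

section \<open>Ideals\<close>

lemma is_ideal_ideal_gen: "is_ideal (ideal_gen G)"
  unfolding is_ideal_def ideal_gen_def by auto

lemma ideal_gen_subset: "G \<subseteq> ideal_gen G"
  unfolding ideal_gen_def by auto

lemma ideal_gen_least: "is_ideal J \<Longrightarrow> G \<subseteq> J \<Longrightarrow> ideal_gen G \<subseteq> J"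
  unfolding ideal_gen_def by auto

lemma ideal_gen_mono: "G \<subseteq> G' \<Longrightarrow> ideal_gen G \<subseteq> ideal_gen G'"
  unfolding ideal_gen_def by auto

lemma is_ideal_UNIV: "is_ideal UNIV"
  unfolding is_ideal_def by auto

lemma ideal_zero: "is_ideal I \<Longrightarrow> 0 \<in> I"
  unfolding is_ideal_def by auto

lemma ideal_add: "is_ideal I \<Longrightarrow> a \<in> I \<Longrightarrow> b \<in> I \<Longrightarrow> a + b \<in> I"
  unfolding is_ideal_def by auto

lemma ideal_mult_left: "is_ideal I \<Longrightarrow> a \<in> I \<Longrightarrow> r * a \<in> I"
  unfolding is_ideal_def by auto

lemma ideal_mult_right: "is_ideal I \<Longrightarrow> a \<in> I \<Longrightarrow> a * r \<in> I"
  using ideal_mult_left[of I a r] by (simp add: mult.commute)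

lemma ideal_diff: "is_ideal I \<Longrightarrow> a \<in> I \<Longrightarrow> b \<in> I \<Longrightarrow> a - b \<in> I"
  using ideal_add[of I a "(- 1) * b"] ideal_mult_left[of I b "- 1"] by simp

lemma ideal_sum: "is_ideal I \<Longrightarrow> (\<And>x. x \<in> A \<Longrightarrow> f x \<in> I) \<Longrightarrow> sum f A \<in> I"
  by (induction A rule: infinite_finite_induct) (auto intro: ideal_zero ideal_add)

lemma ideal_eq_UNIV_iff_one: "is_ideal I \<Longrightarrow> I = UNIV \<longleftrightarrow> 1 \<in> I"
  using ideal_mult_left[of I 1] by force

lemma is_ideal_ideal_pow: "is_ideal (ideal_pow I k)"
  by (cases k) (simp_all add: is_ideal_UNIV ideal_mult_def is_ideal_ideal_gen)

lemma ideal_mult_mem: "a \<in> I \<Longrightarrow> b \<in> J \<Longrightarrow> a * b \<in> ideal_mult I J"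
  unfolding ideal_mult_def by (rule subsetD[OF ideal_gen_subset]) blast

lemma ideal_mult_mono: "I \<subseteq> I' \<Longrightarrow> J \<subseteq> J' \<Longrightarrow> ideal_mult I J \<subseteq> ideal_mult I' J'"
  unfolding ideal_mult_def by (rule ideal_gen_mono) blast

lemma ideal_mult_least:
  "is_ideal K \<Longrightarrow> (\<And>a b. a \<in> I \<Longrightarrow> b \<in> J \<Longrightarrow> a * b \<in> K) \<Longrightarrow> ideal_mult I J \<subseteq> K"
  unfolding ideal_mult_def by (rule ideal_gen_least) auto

lemma ideal_pow_subset:
  assumes I: "is_ideal I" and k: "0 < k"
  shows "ideal_pow I k \<subseteq> I"
proof (cases k)
  case (Suc j)
  have "ideal_mult (ideal_pow I j) I \<subseteq> I"
    using I by (intro ideal_mult_least) (auto intro: ideal_mult_left)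
  then show ?thesis
    using Suc by simp
qed (use k in simp)

lemma power_mem_ideal_pow: "a \<in> I \<Longrightarrow> a ^ k \<in> ideal_pow I k"
proof (induction k)
  case (Suc k)
  then show ?case
    using ideal_mult_mem[of "a ^ k" "ideal_pow I k" a I] by (simp add: mult.commute)
qed simp

lemma is_ideal_colon: "is_ideal J \<Longrightarrow> is_ideal (colon J f)"
  unfolding is_ideal_def colon_def by (auto simp: distrib_right mult.assoc)

lemma ideal_subset_colon: "is_ideal J \<Longrightarrow> J \<subseteq> colon J f"
  unfolding colon_def using ideal_mult_right by blast

lemma colon_eq_UNIV_iff:
  assumes J: "is_ideal J"
  shows "colon J f = UNIV \<longleftrightarrow> f \<in> J"
proof
  assume "colon J f = UNIV"
  then have "1 \<in> colon J f" by simp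
  then show "f \<in> J" by (simp add: colon_def)
next
  assume "f \<in> J"
  then show "colon J f = UNIV"
    using ideal_mult_left[OF J] by (auto simp: colon_def)
qed

lemma prime_ideal_power_mem: "prime_ideal P \<Longrightarrow> a ^ k \<in> P \<Longrightarrow> 0 < k \<Longrightarrow> a \<in> P"
proof (induction k)
  case (Suc k)
  then show ?case unfolding prime_ideal_def by (cases k) auto
qed simp


section \<open>Degrees and homogeneous components\<close>

lemma mdeg_zero [simp]: "mdeg 0 = 0"
  by (simp add: mdeg_def)

lemma mdeg_eq_sum_UNIV: "mdeg (m :: 'v::finite \<Rightarrow>\<^sub>0 nat) = (\<Sum>v\<in>UNIV. Poly_Mapping.lookup m v)"
  unfolding mdeg_def by (rule sum.mono_neutral_left) (auto simp: in_keys_iff)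

lemma mdeg_add: "mdeg ((a :: 'v::finite \<Rightarrow>\<^sub>0 nat) + b) = mdeg a + mdeg b"
  by (simp add: mdeg_eq_sum_UNIV lookup_add sum.distrib)

lemma mdeg_eq_0_iff: "mdeg (m :: 'v::finite \<Rightarrow>\<^sub>0 nat) = 0 \<longleftrightarrow> m = 0"
  by (auto simp: mdeg_eq_sum_UNIV poly_mapping_eq_iff fun_eq_iff)

lemma lookup_le_mdeg: "Poly_Mapping.lookup (m :: 'v::finite \<Rightarrow>\<^sub>0 nat) v \<le> mdeg m"
  unfolding mdeg_eq_sum_UNIV by (rule member_le_sum) auto

lemma finite_mdeg_eq: "finite {m :: 'v::finite \<Rightarrow>\<^sub>0 nat. mdeg m = d}"
proof -
  let ?F = "{f :: 'v \<Rightarrow> nat. \<forall>x. (x \<in> UNIV \<longrightarrow> f x \<in> {0..d}) \<and> (x \<notin> UNIV \<longrightarrow> f x = 0)}"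
  have "finite ?F"
    by (rule finite_set_of_finite_funs) auto
  moreover have "{m. mdeg m = d} \<subseteq> Abs_poly_mapping ` ?F"
  proof
    fix m :: "'v \<Rightarrow>\<^sub>0 nat"
    assume "m \<in> {m. mdeg m = d}"
    then have "Poly_Mapping.lookup m \<in> ?F"
      using lookup_le_mdeg[of m] by auto
    then show "m \<in> Abs_poly_mapping ` ?F"
      by (rule image_eqI[rotated]) (simp add: lookup_inverse)
  qed
  ultimately show ?thesis
    using finite_surj by blast
qed

definition hcomp :: "nat \<Rightarrow> ('v, 'a::zero) mpoly \<Rightarrow> ('v, 'a) mpoly" where
  "hcomp d p = Abs_poly_mapping (\<lambda>m. if mdeg m = d then Poly_Mapping.lookup p m else 0)"

lemma lookup_hcomp [simp]:
  "Poly_Mapping.lookup (hcomp d p) m = (if mdeg m = d then Poly_Mapping.lookup p m else 0)"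
proof -
  have "finite {m. (if mdeg m = d then Poly_Mapping.lookup p m else 0) \<noteq> 0}"
    by (rule finite_subset[OF _ finite_keys[of p]]) (auto simp: in_keys_iff split: if_splits)
  then show ?thesis
    by (simp add: hcomp_def)
qed

lemma keys_hcomp: "Poly_Mapping.keys (hcomp d p) = {m \<in> Poly_Mapping.keys p. mdeg m = d}"
  by (rule set_eqI) (simp add: in_keys_iff)

lemma hcomp_zero [simp]: "hcomp d 0 = 0"
  by (rule poly_mapping_eqI) simp

lemma hcomp_add: "hcomp d (p + q) = hcomp d p + hcomp d (q :: ('v, 'a::comm_monoid_add) mpoly)"
  by (rule poly_mapping_eqI) (simp add: lookup_add)

lemma hcomp_sum: "hcomp d (sum f A) = (\<Sum>x\<in>A. hcomp d (f x :: ('v, 'a::comm_monoid_add) mpoly))"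
  by (rule poly_mapping_eqI) (simp add: lookup_sum sum.neutral)

lemma hcomp_eq_0_if: "(\<And>m. m \<in> Poly_Mapping.keys p \<Longrightarrow> mdeg m \<noteq> d) \<Longrightarrow> hcomp d p = 0"
  by (rule poly_mapping_eqI) (auto simp: in_keys_iff)

lemma sum_hcomp: "(\<Sum>d \<in> mdeg ` Poly_Mapping.keys p. hcomp d p) = (p :: ('v, 'a::comm_monoid_add) mpoly)"
proof (rule poly_mapping_eqI)
  fix m
  show "Poly_Mapping.lookup (\<Sum>d \<in> mdeg ` Poly_Mapping.keys p. hcomp d p) m = Poly_Mapping.lookup p m"
    by (cases "m \<in> Poly_Mapping.keys p") (simp_all add: lookup_sum in_keys_iff)
qed

definition homogeneous :: "('v, 'a::zero) mpoly \<Rightarrow> bool" where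
  "homogeneous p \<longleftrightarrow> (\<exists>d. homogeneous_of d p)"

lemma homogeneous_of_hcomp: "homogeneous_of d (hcomp d p)"
  unfolding homogeneous_of_def by (auto simp: keys_hcomp)

lemma hcomp_homogeneous_of: "homogeneous_of e p \<Longrightarrow> hcomp d p = (if d = e then p else 0)"
  unfolding homogeneous_of_def by (intro poly_mapping_eqI) (auto simp: in_keys_iff)

lemma homogeneous_of_diff:
  "homogeneous_of d p \<Longrightarrow> homogeneous_of d q \<Longrightarrow> homogeneous_of d (p - (q :: ('v, 'a::ab_group_add) mpoly))"
  unfolding homogeneous_of_def using keys_diff[of p q] by fast

lemma homogeneous_of_monomial: "homogeneous_of (mdeg t) (Poly_Mapping.single t c)"
  unfolding homogeneous_of_def by simp

lemma keys_mult_mdeg: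
  fixes p q :: "('v::finite, 'a::comm_ring_1) mpoly"
  assumes "m \<in> Poly_Mapping.keys (p * q)"
  obtains a b where "a \<in> Poly_Mapping.keys p" "b \<in> Poly_Mapping.keys q" "mdeg m = mdeg a + mdeg b"
  using assms keys_mult[of p q] by (auto simp: mdeg_add)

lemma homogeneous_of_mult:
  "homogeneous_of d p \<Longrightarrow> homogeneous_of e q \<Longrightarrow> homogeneous_of (d + e) (p * (q :: ('v::finite, 'a::comm_ring_1) mpoly))"
  unfolding homogeneous_of_def by (metis keys_mult_mdeg)

lemma hcomp_mult_homogeneous:
  fixes x f :: "('v::finite, 'a::comm_ring_1) mpoly"
  assumes f: "homogeneous_of e f"
  shows "hcomp (d + e) (x * f) = hcomp d x * f"
proof -
  define y where "y = x - hcomp d x"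
  have "hcomp (d + e) (y * f) = 0"
  proof (rule hcomp_eq_0_if)
    fix m assume "m \<in> Poly_Mapping.keys (y * f)"
    then obtain a b where "a \<in> Poly_Mapping.keys y" "b \<in> Poly_Mapping.keys f" "mdeg m = mdeg a + mdeg b"
      by (rule keys_mult_mdeg)
    moreover from this have "mdeg a \<noteq> d" "mdeg b = e"
      using f by (auto simp: y_def in_keys_iff lookup_minus homogeneous_of_def)
    ultimately show "mdeg m \<noteq> d + e" by simp
  qed
  moreover have "hcomp (d + e) (hcomp d x * f) = hcomp d x * f"
    using homogeneous_of_mult[OF homogeneous_of_hcomp f] hcomp_homogeneous_of by metis
  moreover have "x * f = hcomp d x * f + y * f"
    by (simp add: y_def algebra_simps)
  ultimately show ?thesis
    by (simp add: hcomp_add)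
qed

lemma hcomp_mult_homogeneous_factor:
  fixes x f :: "('v::finite, 'a::comm_ring_1) mpoly"
  assumes f: "homogeneous_of e f"
  obtains r where "hcomp d (x * f) = r * f"
proof (cases "e \<le> d")
  case True
  then show ?thesis
    using that hcomp_mult_homogeneous[OF f, of "d - e" x] by simp
next
  case False
  have "hcomp d (x * f) = 0"
  proof (rule hcomp_eq_0_if)
    fix m assume "m \<in> Poly_Mapping.keys (x * f)"
    then obtain a b where "a \<in> Poly_Mapping.keys x" "b \<in> Poly_Mapping.keys f" "mdeg m = mdeg a + mdeg b"
      by (rule keys_mult_mdeg)
    then show "mdeg m \<noteq> d"
      using f False by (auto simp: homogeneous_of_def)
  qed
  then show ?thesis
    using that[of 0] by simp
qed


section \<open>Graded ideals\<close>

definition hcomp_closed :: "('v, 'a::zero) mpoly set \<Rightarrow> bool" where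
  "hcomp_closed Q \<longleftrightarrow> (\<forall>g\<in>Q. \<forall>d. hcomp d g \<in> Q)"

lemma hcomp_closed_subsetI:
  fixes Q Q' :: "('v, 'a::comm_ring_1) mpoly set"
  assumes "hcomp_closed Q'" "is_ideal Q" "\<And>g. g \<in> Q' \<Longrightarrow> homogeneous g \<Longrightarrow> g \<in> Q"
  shows "Q' \<subseteq> Q"
proof
  fix g assume g: "g \<in> Q'"
  have "(\<Sum>d \<in> mdeg ` Poly_Mapping.keys g. hcomp d g) \<in> Q"
    using g assms homogeneous_of_hcomp unfolding hcomp_closed_def homogeneous_def
    by (intro ideal_sum) blast+
  then show "g \<in> Q"
    by (simp add: sum_hcomp)
qed

lemma is_ideal_components_in:
  fixes J :: "('v::finite, 'a::comm_ring_1) mpoly set"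
  assumes J: "is_ideal J"
  shows "is_ideal {g. \<forall>d. hcomp d g \<in> J}"
  unfolding is_ideal_def
proof (intro conjI ballI allI)
  show "0 \<in> {g. \<forall>d. hcomp d g \<in> J}"
    using ideal_zero[OF J] by simp
next
  fix a b assume "a \<in> {g. \<forall>d. hcomp d g \<in> J}" "b \<in> {g. \<forall>d. hcomp d g \<in> J}"
  then show "a + b \<in> {g. \<forall>d. hcomp d g \<in> J}"
    by (simp add: hcomp_add ideal_add[OF J])
next
  fix a r assume a: "a \<in> {g. \<forall>d. hcomp d g \<in> J}"
  show "r * a \<in> {g. \<forall>d. hcomp d g \<in> J}"
  proof (intro CollectI allI)
    fix d
    have "hcomp d (r * a) = (\<Sum>e \<in> mdeg ` Poly_Mapping.keys a. hcomp d (r * hcomp e a))"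
      by (subst (1) sum_hcomp[of a, symmetric]) (simp add: sum_distrib_left hcomp_sum)
    also have "\<dots> \<in> J"
    proof (rule ideal_sum[OF J])
      fix e
      obtain s where "hcomp d (r * hcomp e a) = s * hcomp e a"
        using hcomp_mult_homogeneous_factor[OF homogeneous_of_hcomp] by blast
      then show "hcomp d (r * hcomp e a) \<in> J"
        using a by (simp add: ideal_mult_left[OF J])
    qed
    finally show "hcomp d (r * a) \<in> J" .
  qed
qed

lemma hcomp_closed_ideal_gen:
  fixes H :: "('v::finite, 'a::comm_ring_1) mpoly set"
  assumes H: "\<And>h. h \<in> H \<Longrightarrow> homogeneous h"
  shows "hcomp_closed (ideal_gen H)"
proof -
  have "H \<subseteq> {g. \<forall>d. hcomp d g \<in> ideal_gen H}"
  proof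
    fix h assume h: "h \<in> H"
    then obtain e where "homogeneous_of e h"
      using H homogeneous_def by blast
    then show "h \<in> {g. \<forall>d. hcomp d g \<in> ideal_gen H}"
      using h ideal_gen_subset[of H] ideal_zero[OF is_ideal_ideal_gen]
      by (auto simp: hcomp_homogeneous_of)
  qed
  then have "ideal_gen H \<subseteq> {g. \<forall>d. hcomp d g \<in> ideal_gen H}"
    by (rule ideal_gen_least[OF is_ideal_components_in[OF is_ideal_ideal_gen]])
  then show ?thesis
    unfolding hcomp_closed_def by blast
qed

lemma graded_ideal_iff:
  fixes I :: "('v::finite, 'a::comm_ring_1) mpoly set"
  shows "graded_ideal I \<longleftrightarrow> is_ideal I \<and> hcomp_closed I"
proof -
  define H where "H = {f \<in> I. \<exists>d. homogeneous_of d f}"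
  have "hcomp_closed (ideal_gen H)"
    by (rule hcomp_closed_ideal_gen) (auto simp: H_def homogeneous_def)
  moreover have "I = ideal_gen H" if "is_ideal I" "hcomp_closed I"
  proof
    show "ideal_gen H \<subseteq> I"
      using that by (intro ideal_gen_least) (auto simp: H_def)
    show "I \<subseteq> ideal_gen H"
      using that ideal_gen_subset[of H] by (intro hcomp_closed_subsetI is_ideal_ideal_gen)
        (auto simp: H_def homogeneous_def)
  qed
  ultimately show ?thesis
    unfolding graded_ideal_def H_def by metis
qed

lemma graded_ideal_ideal_gen:
  fixes H :: "('v::finite, 'a::comm_ring_1) mpoly set"
  shows "(\<And>h. h \<in> H \<Longrightarrow> homogeneous h) \<Longrightarrow> graded_ideal (ideal_gen H)"
  by (simp add: graded_ideal_iff is_ideal_ideal_gen hcomp_closed_ideal_gen)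

lemma graded_ideal_hcomp: "graded_ideal I \<Longrightarrow> p \<in> I \<Longrightarrow> hcomp d p \<in> (I :: ('v::finite, 'a::comm_ring_1) mpoly set)"
  by (simp add: graded_ideal_iff hcomp_closed_def)

lemma graded_ideal_mult:
  fixes I J :: "('v::finite, 'a::comm_ring_1) mpoly set"
  assumes I: "graded_ideal I" and J: "graded_ideal J"
  shows "graded_ideal (ideal_mult I J)"
proof -
  define G where "G = {a * b | a b. a \<in> I \<and> b \<in> J \<and> homogeneous a \<and> homogeneous b}"
  have "ideal_mult I J = ideal_gen G"
  proof
    show "ideal_gen G \<subseteq> ideal_mult I J"
      unfolding ideal_mult_def G_def by (rule ideal_gen_mono) blast
    show "ideal_mult I J \<subseteq> ideal_gen G"
    proof (rule ideal_mult_least[OF is_ideal_ideal_gen])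
      fix a b assume ab: "a \<in> I" "b \<in> J"
      have "a * b = (\<Sum>p \<in> mdeg ` Poly_Mapping.keys a. \<Sum>q \<in> mdeg ` Poly_Mapping.keys b. hcomp p a * hcomp q b)"
        by (simp only: sum_product[symmetric] sum_hcomp)
      also have "\<dots> \<in> ideal_gen G"
      proof (intro ideal_sum[OF is_ideal_ideal_gen])
        fix p q
        have "hcomp p a * hcomp q b \<in> G"
          unfolding G_def homogeneous_def
          using ab I J graded_ideal_hcomp homogeneous_of_hcomp by blast
        then show "hcomp p a * hcomp q b \<in> ideal_gen G"
          using ideal_gen_subset by blast
      qed
      finally show "a * b \<in> ideal_gen G" .
    qed
  qed
  moreover have "graded_ideal (ideal_gen G)"
    by (rule graded_ideal_ideal_gen) (auto simp: G_def homogeneous_def intro: homogeneous_of_mult)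
  ultimately show ?thesis
    by simp
qed

lemma graded_ideal_pow:
  fixes I :: "('v::finite, 'a::comm_ring_1) mpoly set"
  assumes "graded_ideal I"
  shows "graded_ideal (ideal_pow I k)"
proof (induction k)
  case 0
  show ?case by (simp add: graded_ideal_iff hcomp_closed_def is_ideal_UNIV)
next
  case (Suc k)
  then show ?case by (simp add: graded_ideal_mult assms)
qed

lemma graded_ideal_colon:
  fixes J :: "('v::finite, 'a::comm_ring_1) mpoly set"
  assumes J: "graded_ideal J" and f: "homogeneous_of e f"
  shows "graded_ideal (colon J f)"
  unfolding graded_ideal_iff hcomp_closed_def
proof (intro conjI ballI allI)
  show "is_ideal (colon J f)"
    using J by (simp add: graded_ideal_iff is_ideal_colon)
  fix g d assume "g \<in> colon J f"
  then have "hcomp (d + e) (g * f) \<in> J"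
    using J graded_ideal_hcomp unfolding colon_def by blast
  then show "hcomp d g \<in> colon J f"
    unfolding colon_def hcomp_mult_homogeneous[OF f] by simp
qed


section \<open>A monomial order and leading monomials\<close>

text \<open>The lexicographic order of \<open>nat \<Rightarrow>\<^sub>0 nat\<close>, pulled back along the injective additive map
  \<open>mkey\<close>, is a total order on monomials compatible with multiplication; this avoids
  ordering the variables themselves.\<close>

definition mkey :: "('v::countable \<Rightarrow>\<^sub>0 nat) \<Rightarrow> (nat \<Rightarrow>\<^sub>0 nat)" where
  "mkey m = Abs_poly_mapping (\<lambda>n. if n \<in> range (to_nat :: 'v \<Rightarrow> nat) then Poly_Mapping.lookup m (from_nat n) else 0)"

lemma lookup_mkey:
  fixes m :: "'v::countable \<Rightarrow>\<^sub>0 nat"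
  shows "Poly_Mapping.lookup (mkey m) n = (if n \<in> range (to_nat :: 'v::countable \<Rightarrow> nat) then Poly_Mapping.lookup m (from_nat n) else 0)"
proof -
  have "finite {n. (if n \<in> range (to_nat :: 'v \<Rightarrow> nat) then Poly_Mapping.lookup m (from_nat n) else 0) \<noteq> 0}"
    by (rule finite_subset[OF _ finite_imageI[OF finite_keys[of m], of to_nat]])
      (auto simp: in_keys_iff split: if_splits)
  then show ?thesis
    by (simp add: mkey_def)
qed

lemma lookup_mkey_to_nat [simp]: "Poly_Mapping.lookup (mkey m) (to_nat v) = Poly_Mapping.lookup m v"
  by (simp add: lookup_mkey)

lemma inj_mkey: "inj mkey"
  by (rule injI) (metis lookup_mkey_to_nat poly_mapping_eqI)

lemma mkey_add: "mkey (a + b) = mkey a + mkey b"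
  by (rule poly_mapping_eqI) (simp add: lookup_mkey lookup_add)

definition lm :: "('v::countable, 'a::zero) mpoly \<Rightarrow> ('v \<Rightarrow>\<^sub>0 nat)" where
  "lm p = inv_into (Poly_Mapping.keys p) mkey (Max (mkey ` Poly_Mapping.keys p))"

lemma lm_in_keys_and_mkey:
  assumes "p \<noteq> 0"
  shows "lm p \<in> Poly_Mapping.keys p" "mkey (lm p) = Max (mkey ` Poly_Mapping.keys p)"
proof -
  have "Max (mkey ` Poly_Mapping.keys p) \<in> mkey ` Poly_Mapping.keys p"
    using assms by simp
  then show "lm p \<in> Poly_Mapping.keys p" "mkey (lm p) = Max (mkey ` Poly_Mapping.keys p)"
    unfolding lm_def by (auto intro: inv_into_into f_inv_into_f)
qed

lemma lm_in_keys: "p \<noteq> 0 \<Longrightarrow> lm p \<in> Poly_Mapping.keys p"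
  by (rule lm_in_keys_and_mkey)

lemma mkey_le_lm:
  assumes "m \<in> Poly_Mapping.keys p"
  shows "mkey m \<le> mkey (lm p)"
proof -
  have "p \<noteq> 0"
    using assms by auto
  then show ?thesis
    using assms by (simp add: lm_in_keys_and_mkey(2))
qed

lemma mkey_less_lm: "m \<in> Poly_Mapping.keys p \<Longrightarrow> m \<noteq> lm p \<Longrightarrow> mkey m < mkey (lm p)"
  using mkey_le_lm inj_mkey by (metis injD order_le_imp_less_or_eq)

lemma lm_eqI:
  assumes "m \<in> Poly_Mapping.keys p" "\<And>m'. m' \<in> Poly_Mapping.keys p \<Longrightarrow> mkey m' \<le> mkey m"
  shows "lm p = m"
proof -
  have "p \<noteq> 0"
    using assms(1) by auto
  then have "mkey (lm p) = mkey m"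
    using assms lm_in_keys mkey_le_lm by (metis order_antisym)
  then show ?thesis
    using injD[OF inj_mkey] by blast
qed

lemma lookup_monomial_mult:
  "Poly_Mapping.lookup (Poly_Mapping.single t c * p) (t + m) = c * Poly_Mapping.lookup (p :: ('v, 'a::comm_ring_1) mpoly) m"
  by (simp add: lookup_mult lookup_single when_mult Sum_any_right_distrib mult_when)

lemma keys_monomial_mult:
  "k \<in> Poly_Mapping.keys (Poly_Mapping.single t c * p) \<Longrightarrow> \<exists>m \<in> Poly_Mapping.keys p. k = t + m"
  using keys_mult[of "Poly_Mapping.single t c" p] by (auto split: if_splits)

lemma lm_monomial_mult:
  fixes p :: "('v::countable, 'a::idom) mpoly"
  assumes "p \<noteq> 0" "c \<noteq> 0"
  shows "Poly_Mapping.single t c * p \<noteq> 0" "lm (Poly_Mapping.single t c * p) = t + lm p"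
proof -
  have k: "t + lm p \<in> Poly_Mapping.keys (Poly_Mapping.single t c * p)"
    using lm_in_keys[OF assms(1)] assms(2) by (simp add: in_keys_iff lookup_monomial_mult)
  then show "Poly_Mapping.single t c * p \<noteq> 0"
    by auto
  show "lm (Poly_Mapping.single t c * p) = t + lm p"
    by (rule lm_eqI[OF k]) (auto dest!: keys_monomial_mult simp: mkey_add intro: add_left_mono mkey_le_lm)
qed

lemma lookup_mult_lm:
  fixes f g :: "('v::countable, 'a::comm_ring_1) mpoly"
  assumes f: "f \<noteq> 0"
  shows "Poly_Mapping.lookup (f * g) (lm f + lm g) = Poly_Mapping.lookup f (lm f) * Poly_Mapping.lookup g (lm g)"
proof -
  define F where "F l = Poly_Mapping.lookup f l * (\<Sum>q. Poly_Mapping.lookup g q when lm f + lm g = l + q)" for l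
  have "F l = 0" if "l \<noteq> lm f" for l
  proof -
    have "(Poly_Mapping.lookup g q when lm f + lm g = l + q) = 0" if "l \<in> Poly_Mapping.keys f" for q
    proof (cases "q \<in> Poly_Mapping.keys g")
      case True
      have "mkey l + mkey q < mkey (lm f) + mkey (lm g)"
        using mkey_less_lm[OF that \<open>l \<noteq> lm f\<close>] mkey_le_lm[OF True] by (rule add_less_le_mono)
      then show ?thesis
        by (cases "lm f + lm g = l + q") (auto simp: mkey_add[symmetric])
    qed (simp add: in_keys_iff)
    then show ?thesis
      by (cases "l \<in> Poly_Mapping.keys f") (simp_all add: F_def in_keys_iff)
  qed
  then have "Poly_Mapping.lookup (f * g) (lm f + lm g) = sum F {lm f}"
    unfolding lookup_mult F_def[symmetric] by (intro Sum_any.expand_superset) auto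
  then show ?thesis
    by (simp add: F_def)
qed

lemma mult_neq_zero:
  fixes f g :: "('v::countable, 'a::idom) mpoly"
  assumes "f \<noteq> 0" "g \<noteq> 0"
  shows "f * g \<noteq> 0"
proof -
  have "Poly_Mapping.lookup (f * g) (lm f + lm g) \<noteq> 0"
    using lookup_mult_lm[OF assms(1)] lm_in_keys[OF assms(1)] lm_in_keys[OF assms(2)]
    by (simp add: in_keys_iff)
  then show ?thesis
    by auto
qed


section \<open>Dickson's lemma\<close>

definition mdvd :: "('v \<Rightarrow>\<^sub>0 nat) \<Rightarrow> ('v \<Rightarrow>\<^sub>0 nat) \<Rightarrow> bool" where
  "mdvd a b \<longleftrightarrow> (\<forall>v. Poly_Mapping.lookup a v \<le> Poly_Mapping.lookup b v)"

lemma mdvd_imp_eq_add: "mdvd a b \<Longrightarrow> b = (b - a) + a"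
  unfolding mdvd_def by (intro poly_mapping_eqI) (simp add: lookup_add lookup_minus)

lemma nat_seq_not_strictly_decreasing:
  fixes s :: "nat \<Rightarrow> nat"
  obtains n where "s n \<le> s (Suc n)"
proof (rule ccontr)
  assume "\<not> thesis"
  with that have "\<not> s n \<le> s (Suc n)" for n
    by blast
  then have "\<forall>n. (s (Suc n), s n) \<in> less_than"
    by (simp add: not_le)
  then show False
    using wf_less_than wf_iff_no_infinite_down_chain by blast
qed

text \<open>Colour each pair \<open>i < j\<close> by the set of variables in which the exponent does not decrease from
  \<open>m i\<close> to \<open>m j\<close>. On an infinite monochromatic set (Ramsey) a variable missing from the colour would
  have strictly decreasing exponents, so the colour is the set of all variables.\<close>

lemma monomial_sequence_mdvd:
  fixes m :: "nat \<Rightarrow> ('v::finite \<Rightarrow>\<^sub>0 nat)"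
  obtains i j where "i < j" "mdvd (m i) (m j)"
proof -
  define C where "C i j = {v. Poly_Mapping.lookup (m i) v \<le> Poly_Mapping.lookup (m j) v}" for i j
  obtain code :: "'v set \<Rightarrow> nat" and s where code: "code ` UNIV = {i. i < s}" "inj code"
    using finite_imp_inj_to_nat_seg[of "UNIV :: 'v set set"] by auto
  define colour where "colour X = code (C (Min X) (Max X))" for X
  have "\<forall>x\<in>UNIV. \<forall>y\<in>UNIV. x \<noteq> y \<longrightarrow> colour {x, y} < s"
    using code(1) unfolding colour_def by blast
  then obtain Y t where Y: "infinite Y" "\<forall>x\<in>Y. \<forall>y\<in>Y. x \<noteq> y \<longrightarrow> colour {x, y} = t"
    using Ramsey2[of "UNIV :: nat set" colour s] by auto
  define e where "e = enumerate Y"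
  have e: "i < j \<Longrightarrow> e i < e j" "e i \<in> Y" for i j
    using Y(1) by (simp_all add: e_def enumerate_mono enumerate_in_set)
  have C_const: "C (e i) (e j) = C (e 0) (e 1)" if "i < j" for i j
  proof -
    have "colour {e i, e j} = colour {e 0, e 1}"
      using Y(2) e that by (metis less_numeral_extra(1) order_less_irrefl)
    then show ?thesis
      using e(1)[OF that] e(1)[of 0 1] injD[OF code(2)] by (simp add: colour_def)
  qed
  have C_Suc: "C (e n) (e (Suc n)) = C (e 0) (e 1)" for n
    by (rule C_const) simp
  show ?thesis
  proof (cases "C (e 0) (e 1) = UNIV")
    case True
    then have "mdvd (m (e 0)) (m (e 1))"
      by (auto simp: mdvd_def C_def)
    with e(1)[of 0 1] show ?thesis
      by (intro that) simp_all
  next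
    case False
    then obtain v where v: "v \<notin> C (e 0) (e 1)"
      by blast
    have decreasing: "Poly_Mapping.lookup (m (e (Suc n))) v < Poly_Mapping.lookup (m (e n)) v" for n
    proof -
      have "v \<notin> C (e n) (e (Suc n))"
        using C_Suc[of n] v by simp
      then show ?thesis
        by (simp add: C_def)
    qed
    obtain n where "Poly_Mapping.lookup (m (e n)) v \<le> Poly_Mapping.lookup (m (e (Suc n))) v"
      by (rule nat_seq_not_strictly_decreasing)
    with decreasing[of n] show ?thesis
      by simp
  qed
qed


section \<open>Ascending chain condition for graded ideals\<close>

definition LM :: "('v::countable, 'a::zero) mpoly set \<Rightarrow> ('v \<Rightarrow>\<^sub>0 nat) set" where
  "LM Q = {lm p | p. p \<in> Q \<and> p \<noteq> 0 \<and> homogeneous p}"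

lemma LM_mono: "Q \<subseteq> Q' \<Longrightarrow> LM Q \<subseteq> LM Q'"
  unfolding LM_def by blast

lemma LM_mdvd_closed:
  fixes Q :: "('v::finite, 'a::idom) mpoly set"
  assumes Q: "is_ideal Q" and m: "m \<in> LM Q" and "mdvd m m'"
  shows "m' \<in> LM Q"
proof -
  obtain p where p: "p \<in> Q" "p \<noteq> 0" "homogeneous p" "lm p = m"
    using m unfolding LM_def by blast
  define t where "t = m' - m"
  have "m' = t + m"
    using mdvd_imp_eq_add[OF \<open>mdvd m m'\<close>] by (simp add: t_def)
  then have "Poly_Mapping.single t 1 * p \<noteq> 0" "lm (Poly_Mapping.single t 1 * p) = m'"
    using lm_monomial_mult[OF p(2), of 1 t] p(4) by auto
  moreover have "Poly_Mapping.single t 1 * p \<in> Q"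
    using ideal_mult_left[OF Q p(1)] .
  moreover have "homogeneous (Poly_Mapping.single t 1 * p)"
    using p(3) homogeneous_of_mult[OF homogeneous_of_monomial] unfolding homogeneous_def by blast
  ultimately show ?thesis
    unfolding LM_def by (intro CollectI exI[of _ "Poly_Mapping.single t 1 * p"]) simp
qed

lemma mdeg_lm: "homogeneous_of d g \<Longrightarrow> g \<noteq> 0 \<Longrightarrow> mdeg (lm g) = d"
  unfolding homogeneous_of_def using lm_in_keys by blast

lemma leading_term_cancel:
  fixes g h :: "('v::finite, 'a::field) mpoly"
  assumes g: "homogeneous_of d g" "g \<noteq> 0" and h: "homogeneous_of d h" "h \<noteq> 0" "lm h = lm g"
  obtains c where "homogeneous_of d (g - Poly_Mapping.single 0 c * h)"
    "g - Poly_Mapping.single 0 c * h = 0 \<or> mkey (lm (g - Poly_Mapping.single 0 c * h)) < mkey (lm g)"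
proof -
  define c where "c = Poly_Mapping.lookup g (lm g) / Poly_Mapping.lookup h (lm g)"
  define r where "r = g - Poly_Mapping.single 0 c * h"
  have lookup_smult: "Poly_Mapping.lookup (Poly_Mapping.single 0 c * h) m = c * Poly_Mapping.lookup h m" for m
    using lookup_monomial_mult[of 0 c h m] by simp
  have "homogeneous_of d (Poly_Mapping.single 0 c * h)"
    using homogeneous_of_mult[OF homogeneous_of_monomial h(1), of 0 c] by simp
  then have "homogeneous_of d r"
    unfolding r_def by (rule homogeneous_of_diff[OF g(1)])
  moreover have "mkey (lm r) < mkey (lm g)" if "r \<noteq> 0"
  proof -
    have "lm r \<in> Poly_Mapping.keys g \<union> Poly_Mapping.keys h"
      using lm_in_keys[OF that] keys_diff[of g] unfolding r_def
      by (auto simp: in_keys_iff lookup_minus lookup_smult)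
    then have "mkey (lm r) \<le> mkey (lm g)"
      using mkey_le_lm h(3) by (metis Un_iff)
    moreover have "Poly_Mapping.lookup h (lm g) \<noteq> 0"
      using lm_in_keys[OF h(2)] h(3) by (simp add: in_keys_iff)
    then have "Poly_Mapping.lookup r (lm g) = 0"
      by (simp add: r_def lookup_minus lookup_smult, simp add: c_def)
    then have "lm r \<noteq> lm g"
      using lm_in_keys[OF that] by (auto simp: in_keys_iff)
    ultimately show ?thesis
      using inj_mkey by (metis injD order_le_imp_less_or_eq)
  qed
  ultimately show ?thesis
    using that unfolding r_def by blast
qed

definition mkey_below :: "nat \<Rightarrow> ('v::countable \<Rightarrow>\<^sub>0 nat) \<Rightarrow> ('v \<Rightarrow>\<^sub>0 nat) set" where
  "mkey_below d a = {m. mdeg m = d \<and> mkey m < mkey a}"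

lemma card_mkey_below_less:
  fixes a b :: "'v::finite \<Rightarrow>\<^sub>0 nat"
  assumes "mdeg a = d" "mkey a < mkey b"
  shows "card (mkey_below d a) < card (mkey_below d b)"
proof (rule psubset_card_mono)
  show "finite (mkey_below d b)"
    by (simp add: mkey_below_def finite_mdeg_eq)
  have "mkey_below d a \<subseteq> mkey_below d b"
    using assms(2) by (auto simp: mkey_below_def)
  moreover have "a \<in> mkey_below d b" "a \<notin> mkey_below d a"
    using assms by (auto simp: mkey_below_def)
  ultimately show "mkey_below d a \<subset> mkey_below d b"
    by blast
qed

lemma LM_reduction_step:
  fixes Q Q' :: "('v::finite, 'a::field) mpoly set"
  assumes Q: "is_ideal Q" and LM_sub: "LM Q' \<subseteq> LM Q"
    and g: "homogeneous_of d g" "g \<in> Q'" "g \<noteq> 0"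
  obtains s where "s \<in> Q" "homogeneous_of d (g - s)" "g - s = 0 \<or> mkey (lm (g - s)) < mkey (lm g)"
proof -
  have "lm g \<in> LM Q"
    using g LM_sub unfolding LM_def homogeneous_def by blast
  then obtain h where h: "h \<in> Q" "h \<noteq> 0" "homogeneous h" "lm h = lm g"
    unfolding LM_def by auto
  then obtain e where e: "homogeneous_of e h"
    unfolding homogeneous_def by blast
  then have "e = d"
    using mdeg_lm[OF e h(2)] mdeg_lm[OF g(1,3)] h(4) by simp
  then obtain c where "homogeneous_of d (g - Poly_Mapping.single 0 c * h)"
    "g - Poly_Mapping.single 0 c * h = 0 \<or> mkey (lm (g - Poly_Mapping.single 0 c * h)) < mkey (lm g)"
    using leading_term_cancel[OF g(1,3)] e h(2,4) by metis
  moreover have "Poly_Mapping.single 0 c * h \<in> Q"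
    using ideal_mult_left[OF Q h(1)] .
  ultimately show ?thesis
    using that by blast
qed

text \<open>Reduce a homogeneous element of \<open>Q'\<close> modulo \<open>Q\<close>, inducting on the number of monomials of its
  degree below its leading monomial.\<close>

lemma graded_ideal_subset_if_LM_subset:
  fixes Q Q' :: "('v::finite, 'a::field) mpoly set"
  assumes Q: "is_ideal Q" and Q': "graded_ideal Q'" and sub: "Q \<subseteq> Q'" and LM_sub: "LM Q' \<subseteq> LM Q"
  shows "Q' \<subseteq> Q"
proof -
  have Q'_ideal: "is_ideal Q'" and Q'_closed: "hcomp_closed Q'"
    using Q' by (simp_all add: graded_ideal_iff)
  have "g \<in> Q" if "homogeneous_of d g" "g \<in> Q'" for d g
    using that
  proof (induction "card (mkey_below d (lm g))" arbitrary: g rule: less_induct)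
    case less
    show ?case
    proof (cases "g = 0")
      case True
      then show ?thesis using ideal_zero[OF Q] by simp
    next
      case False
      then obtain s where s: "s \<in> Q" "homogeneous_of d (g - s)"
        "g - s = 0 \<or> mkey (lm (g - s)) < mkey (lm g)"
        using LM_reduction_step[OF Q LM_sub less.prems] by blast
      have "g - s \<in> Q"
      proof (cases "g - s = 0")
        case True
        then show ?thesis using ideal_zero[OF Q] by simp
      next
        case False
        then have "card (mkey_below d (lm (g - s))) < card (mkey_below d (lm g))"
          using s(3) by (intro card_mkey_below_less mdeg_lm[OF s(2)]) simp_all
        moreover have "g - s \<in> Q'"
          using ideal_diff[OF Q'_ideal less.prems(2)] s(1) sub by blast
        ultimately show ?thesis
          using less.hyps s(2) by blast
      qed
      then show "g \<in> Q"
        using ideal_add[OF Q _ s(1)] by fastforce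
    qed
  qed
  then show ?thesis
    using hcomp_closed_subsetI[OF Q'_closed Q] unfolding homogeneous_def by blast
qed

text \<open>In a strictly ascending chain each ideal has a new leading monomial; by Dickson's lemma one of
  these divides a later one, which therefore is not new.\<close>

lemma wf_graded_ideal_ascent:
  "wf {(Q', Q :: ('v::finite, 'a::field) mpoly set). Q \<subset> Q' \<and> graded_ideal Q \<and> graded_ideal Q'}"
  (is "wf ?R")
proof (rule ccontr)
  assume "\<not> wf ?R"
  then obtain F where "\<forall>i. (F (Suc i), F i) \<in> ?R"
    unfolding wf_iff_no_infinite_down_chain by blast
  then have F: "F i \<subset> F (Suc i)" "graded_ideal (F i)" "is_ideal (F i)" for i
    by (simp_all add: graded_ideal_iff)
  have "\<not> LM (F (Suc i)) \<subseteq> LM (F i)" for i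
    using graded_ideal_subset_if_LM_subset[OF F(3) F(2) psubset_imp_subset[OF F(1)]] F(1)[of i] by blast
  then have "\<forall>i. \<exists>u. u \<in> LM (F (Suc i)) \<and> u \<notin> LM (F i)"
    by blast
  then obtain u where u: "\<And>i. u i \<in> LM (F (Suc i))" "\<And>i. u i \<notin> LM (F i)"
    by metis
  obtain i j where "i < j" "mdvd (u i) (u j)"
    by (rule monomial_sequence_mdvd)
  have "F (Suc i) \<subseteq> F j"
    using lift_Suc_mono_le[of F "Suc i" j] F(1) \<open>i < j\<close> by (meson Suc_leI psubset_imp_subset)
  then have "u i \<in> LM (F j)"
    using LM_mono u(1) by blast
  then have "u j \<in> LM (F j)"
    using LM_mdvd_closed[OF F(3)] \<open>mdvd (u i) (u j)\<close> by blast
  then show False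
    using u(2) by blast
qed


section \<open>Homogeneous associated primes\<close>

definition tdeg :: "('v, 'a::zero) mpoly \<Rightarrow> nat" where
  "tdeg p = Max (mdeg ` Poly_Mapping.keys p)"

lemma mdeg_le_tdeg: "m \<in> Poly_Mapping.keys p \<Longrightarrow> mdeg m \<le> tdeg p"
  unfolding tdeg_def by simp

lemma keys_diff_hcomp:
  "m \<in> Poly_Mapping.keys (p - hcomp d p) \<longleftrightarrow> m \<in> Poly_Mapping.keys (p :: ('v, 'a::ab_group_add) mpoly) \<and> mdeg m \<noteq> d"
  by (auto simp: in_keys_iff lookup_minus)

lemma hcomp_tdeg_mult:
  fixes a b :: "('v::finite, 'a::comm_ring_1) mpoly"
  shows "hcomp (tdeg a + tdeg b) (a * b) = hcomp (tdeg a) a * hcomp (tdeg b) b"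
proof -
  define A where "A = hcomp (tdeg a) a"
  define B where "B = hcomp (tdeg b) b"
  have low: "mdeg m < tdeg p" if "m \<in> Poly_Mapping.keys (p - hcomp (tdeg p) p)" for m and p :: "('v, 'a) mpoly"
    using that mdeg_le_tdeg[of m p] by (simp add: keys_diff_hcomp)
  have "hcomp (tdeg a + tdeg b) (A * (b - B)) = 0"
  proof (rule hcomp_eq_0_if)
    fix m assume "m \<in> Poly_Mapping.keys (A * (b - B))"
    then obtain x y where "x \<in> Poly_Mapping.keys A" "y \<in> Poly_Mapping.keys (b - B)" "mdeg m = mdeg x + mdeg y"
      by (rule keys_mult_mdeg)
    moreover from this have "mdeg x = tdeg a" "mdeg y < tdeg b"
      using low[of y b] by (simp_all add: A_def B_def keys_hcomp)
    ultimately show "mdeg m \<noteq> tdeg a + tdeg b"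
      by simp
  qed
  moreover have "hcomp (tdeg a + tdeg b) ((a - A) * b) = 0"
  proof (rule hcomp_eq_0_if)
    fix m assume "m \<in> Poly_Mapping.keys ((a - A) * b)"
    then obtain x y where "x \<in> Poly_Mapping.keys (a - A)" "y \<in> Poly_Mapping.keys b" "mdeg m = mdeg x + mdeg y"
      by (rule keys_mult_mdeg)
    moreover from this have "mdeg x < tdeg a" "mdeg y \<le> tdeg b"
      using low[of x a] mdeg_le_tdeg[of y b] by (simp_all add: A_def)
    ultimately show "mdeg m \<noteq> tdeg a + tdeg b"
      by simp
  qed
  moreover have "hcomp (tdeg a + tdeg b) (A * B) = A * B"
    using hcomp_homogeneous_of[OF homogeneous_of_mult, of "tdeg a" A "tdeg b" B "tdeg a + tdeg b"]
    by (simp add: A_def B_def homogeneous_of_hcomp)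
  moreover have "a * b = A * B + (A * (b - B) + (a - A) * b)"
    by (simp add: algebra_simps)
  ultimately show ?thesis
    by (simp add: hcomp_add A_def B_def)
qed

lemma card_keys_diff_hcomp_tdeg:
  fixes p :: "('v, 'a::ab_group_add) mpoly"
  assumes "p \<noteq> 0"
  shows "card (Poly_Mapping.keys (p - hcomp (tdeg p) p)) < card (Poly_Mapping.keys p)"
proof (rule psubset_card_mono)
  have "Max (mdeg ` Poly_Mapping.keys p) \<in> mdeg ` Poly_Mapping.keys p"
    using assms by simp
  then obtain m where "m \<in> Poly_Mapping.keys p" "mdeg m = tdeg p"
    unfolding tdeg_def by auto
  then show "Poly_Mapping.keys (p - hcomp (tdeg p) p) \<subset> Poly_Mapping.keys p"
    using keys_diff_hcomp[of _ p "tdeg p"] by blast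
qed simp

text \<open>For a counterexample \<open>a b\<close> with fewest terms, the top-degree components of \<open>a\<close> and \<open>b\<close> lie outside
  \<open>Q\<close> (otherwise removing one gives a smaller counterexample), and their product is the top-degree
  component of \<open>a b\<close>.\<close>

lemma prime_ideal_if_homogeneous_prime:
  fixes Q :: "('v::finite, 'a::field) mpoly set"
  assumes Q: "graded_ideal Q" "Q \<noteq> UNIV"
    and hom_prime: "\<And>a b. homogeneous a \<Longrightarrow> homogeneous b \<Longrightarrow> a * b \<in> Q \<Longrightarrow> a \<in> Q \<or> b \<in> Q"
  shows "prime_ideal Q"
proof -
  have Q_ideal: "is_ideal Q"
    using Q(1) by (simp add: graded_ideal_iff)
  have "a * b \<notin> Q" if "a \<notin> Q" "b \<notin> Q" for a b
    using that
  proof (induction "card (Poly_Mapping.keys a) + card (Poly_Mapping.keys b)" arbitrary: a b rule: less_induct)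
    case less
    have reduce: "x * y \<notin> Q"
      if xy: "card (Poly_Mapping.keys x) + card (Poly_Mapping.keys y) = card (Poly_Mapping.keys a) + card (Poly_Mapping.keys b)"
        "x \<notin> Q" "y \<notin> Q" "hcomp (tdeg x) x \<in> Q" for x y
    proof
      define x' where "x' = x - hcomp (tdeg x) x"
      assume "x * y \<in> Q"
      have "x' \<notin> Q"
        using xy(2,4) ideal_add[OF Q_ideal, of x' "hcomp (tdeg x) x"] unfolding x'_def by auto
      moreover have "x \<noteq> 0"
        using xy(2) ideal_zero[OF Q_ideal] by auto
      then have "card (Poly_Mapping.keys x') < card (Poly_Mapping.keys x)"
        unfolding x'_def by (rule card_keys_diff_hcomp_tdeg)
      ultimately have "x' * y \<notin> Q"
        using less.hyps xy(1,3) by simp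
      moreover have "x' * y = x * y - hcomp (tdeg x) x * y"
        unfolding x'_def by (simp add: algebra_simps)
      ultimately show False
        using ideal_diff[OF Q_ideal \<open>x * y \<in> Q\<close> ideal_mult_right[OF Q_ideal xy(4)]] by simp
    qed
    consider "hcomp (tdeg a) a \<in> Q" | "hcomp (tdeg b) b \<in> Q"
      | "hcomp (tdeg a) a \<notin> Q" "hcomp (tdeg b) b \<notin> Q"
      by blast
    then show ?case
    proof cases
      case 1
      then show ?thesis using reduce less.prems by blast
    next
      case 2
      then show ?thesis using reduce[of b a] less.prems by (simp add: mult.commute)
    next
      case 3
      then have "hcomp (tdeg a + tdeg b) (a * b) \<notin> Q"
        using hom_prime homogeneous_of_hcomp unfolding hcomp_tdeg_mult homogeneous_def by blast
      then show ?thesis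
        using graded_ideal_hcomp[OF Q(1)] by blast
    qed
  qed
  then show ?thesis
    unfolding prime_ideal_def using Q_ideal Q(2) by blast
qed

lemma maximal_homogeneous_colon_ex:
  fixes J :: "('v::finite, 'a::field) mpoly set"
  assumes J: "graded_ideal J" "J \<noteq> UNIV"
  obtains f where "homogeneous f" "f \<notin> J"
    "\<And>g. homogeneous g \<Longrightarrow> g \<notin> J \<Longrightarrow> colon J f \<subseteq> colon J g \<Longrightarrow> colon J g = colon J f"
proof -
  have J_ideal: "is_ideal J"
    using J(1) by (simp add: graded_ideal_iff)
  define A where "A = {colon J g | g. homogeneous g \<and> g \<notin> J}"
  have "homogeneous_of 0 (1 :: ('v, 'a) mpoly)"
    unfolding homogeneous_of_def by (simp add: mdeg_eq_0_iff)
  then have "colon J 1 \<in> A"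
    using J ideal_eq_UNIV_iff_one[OF J_ideal] unfolding A_def homogeneous_def by blast
  then obtain M where "M \<in> A"
    and M_max: "\<And>Q. (Q, M) \<in> {(Q', Q). Q \<subset> Q' \<and> graded_ideal Q \<and> graded_ideal Q'} \<Longrightarrow> Q \<notin> A"
    by (rule wfE_min[OF wf_graded_ideal_ascent]) iprover
  then obtain f where f: "M = colon J f" "homogeneous f" "f \<notin> J"
    unfolding A_def by blast
  have graded_colon: "graded_ideal (colon J g)" if "homogeneous g" for g
    using graded_ideal_colon[OF J(1)] that unfolding homogeneous_def by blast
  show ?thesis
  proof (rule that[OF f(2,3)])
    fix g assume g: "homogeneous g" "g \<notin> J" "colon J f \<subseteq> colon J g"
    then have "colon J g \<in> A"
      unfolding A_def by blast
    show "colon J g = colon J f"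
    proof (rule ccontr)
      assume "colon J g \<noteq> colon J f"
      then have "(colon J g, M) \<in> {(Q', Q). Q \<subset> Q' \<and> graded_ideal Q \<and> graded_ideal Q'}"
        using g(3) graded_colon[OF g(1)] graded_colon[OF f(2)] f(1) by auto
      then show False
        using M_max \<open>colon J g \<in> A\<close> by blast
    qed
  qed
qed

lemma prime_ideal_maximal_colon:
  fixes J :: "('v::finite, 'a::field) mpoly set"
  assumes J: "graded_ideal J" and f: "homogeneous f" "f \<notin> J"
    and maximal: "\<And>g. homogeneous g \<Longrightarrow> g \<notin> J \<Longrightarrow> colon J f \<subseteq> colon J g \<Longrightarrow> colon J g = colon J f"
  shows "prime_ideal (colon J f)"
proof (rule prime_ideal_if_homogeneous_prime)
  have J_ideal: "is_ideal J"
    using J by (simp add: graded_ideal_iff)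
  show "graded_ideal (colon J f)"
    using graded_ideal_colon[OF J] f(1) unfolding homogeneous_def by blast
  show "colon J f \<noteq> UNIV"
    using colon_eq_UNIV_iff[OF J_ideal] f(2) by simp
  fix a b assume ab: "homogeneous a" "homogeneous b" "a * b \<in> colon J f"
  show "a \<in> colon J f \<or> b \<in> colon J f"
  proof (cases "a \<in> colon J f")
    case False
    then have "a * f \<notin> J"
      unfolding colon_def by simp
    moreover have "homogeneous (a * f)"
      using ab(1) f(1) homogeneous_of_mult unfolding homogeneous_def by blast
    moreover have "colon J f \<subseteq> colon J (a * f)"
    proof
      fix x assume "x \<in> colon J f"
      then have "a * (x * f) \<in> J"
        unfolding colon_def by (simp add: ideal_mult_left[OF J_ideal])
      then show "x \<in> colon J (a * f)"
        unfolding colon_def by (simp add: mult.left_commute)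
    qed
    ultimately have "colon J (a * f) = colon J f"
      using maximal by blast
    moreover have "b \<in> colon J (a * f)"
      using ab(3) by (simp add: colon_def mult.commute mult.left_commute)
    ultimately show ?thesis
      by simp
  qed simp
qed

lemma graded_ideal_homogeneous_associated_prime:
  fixes J :: "('v::finite, 'a::field) mpoly set"
  assumes "graded_ideal J" "J \<noteq> UNIV"
  shows "\<exists>d. \<exists>f\<in>Sdeg d. colon J f \<in> Ass J"
proof -
  obtain f where "homogeneous f" "f \<notin> J"
    "\<And>g. homogeneous g \<Longrightarrow> g \<notin> J \<Longrightarrow> colon J f \<subseteq> colon J g \<Longrightarrow> colon J g = colon J f"
    using maximal_homogeneous_colon_ex[OF assms] by blast
  then have "prime_ideal (colon J f)"
    using prime_ideal_maximal_colon[OF assms(1)] by blast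
  then show ?thesis
    using \<open>homogeneous f\<close> unfolding Ass_def Sdeg_def homogeneous_def by blast
qed


section \<open>The degree bound\<close>

definition deg_at_least :: "nat \<Rightarrow> ('v, 'a::zero) mpoly set" where
  "deg_at_least e = {p. \<forall>m\<in>Poly_Mapping.keys p. e \<le> mdeg m}"

lemma is_ideal_deg_at_least: "is_ideal (deg_at_least e :: ('v::finite, 'a::comm_ring_1) mpoly set)"
  unfolding is_ideal_def deg_at_least_def
proof (intro conjI ballI allI; clarsimp)
  fix a b :: "('v, 'a) mpoly" and m
  assume "\<forall>m\<in>Poly_Mapping.keys a. e \<le> mdeg m" "\<forall>m\<in>Poly_Mapping.keys b. e \<le> mdeg m"
    "m \<in> Poly_Mapping.keys (a + b)"
  then show "e \<le> mdeg m"
    using keys_add[of a b] by blast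
next
  fix a r :: "('v, 'a) mpoly" and m
  assume a: "\<forall>m\<in>Poly_Mapping.keys a. e \<le> mdeg m" and m: "m \<in> Poly_Mapping.keys (r * a)"
  from m obtain x y where "x \<in> Poly_Mapping.keys r" "y \<in> Poly_Mapping.keys a" "mdeg m = mdeg x + mdeg y"
    by (rule keys_mult_mdeg)
  then show "e \<le> mdeg m"
    using a by fastforce
qed

lemma ideal_mult_deg_at_least:
  "ideal_mult (deg_at_least a) (deg_at_least b) \<subseteq> (deg_at_least (a + b) :: ('v::finite, 'a::comm_ring_1) mpoly set)"
proof (rule ideal_mult_least[OF is_ideal_deg_at_least])
  fix x y :: "('v, 'a) mpoly"
  assume "x \<in> deg_at_least a" "y \<in> deg_at_least b"
  then have x: "\<forall>m\<in>Poly_Mapping.keys x. a \<le> mdeg m" and y: "\<forall>m\<in>Poly_Mapping.keys y. b \<le> mdeg m"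
    by (simp_all add: deg_at_least_def)
  show "x * y \<in> deg_at_least (a + b)"
    unfolding deg_at_least_def
  proof (intro CollectI ballI)
    fix m assume "m \<in> Poly_Mapping.keys (x * y)"
    then obtain u v where "u \<in> Poly_Mapping.keys x" "v \<in> Poly_Mapping.keys y" "mdeg m = mdeg u + mdeg v"
      by (rule keys_mult_mdeg)
    then show "a + b \<le> mdeg m"
      using x y by (simp add: add_mono)
  qed
qed

lemma graded_ideal_subset_deg_at_least_alpha:
  fixes I :: "('v::finite, 'a::comm_ring_1) mpoly set"
  assumes "graded_ideal I"
  shows "I \<subseteq> deg_at_least (alpha I)"
proof -
  have "ideal_gen {f \<in> I. \<exists>d. homogeneous_of d f} \<subseteq> deg_at_least (alpha I)"
  proof (rule ideal_gen_least[OF is_ideal_deg_at_least], clarify)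
    fix f d assume f: "f \<in> I" "homogeneous_of d f"
    show "f \<in> deg_at_least (alpha I)"
    proof (cases "f = 0")
      case False
      then have "alpha I \<le> d"
        unfolding alpha_def using f by (intro Least_le) (auto simp: Sdeg_def)
      then show ?thesis
        using f(2) unfolding deg_at_least_def homogeneous_of_def by auto
    qed (simp add: deg_at_least_def)
  qed
  then show ?thesis
    using assms unfolding graded_ideal_def by simp
qed

lemma ideal_pow_subset_deg_at_least:
  fixes I :: "('v::finite, 'a::comm_ring_1) mpoly set"
  assumes "graded_ideal I"
  shows "ideal_pow I k \<subseteq> deg_at_least (alpha I * k)"
proof (induction k)
  case 0
  then show ?case by (simp add: deg_at_least_def)
next
  case (Suc k)
  have "ideal_pow I (Suc k) \<subseteq> ideal_mult (deg_at_least (alpha I * k)) (deg_at_least (alpha I))"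
    using ideal_mult_mono[OF Suc graded_ideal_subset_deg_at_least_alpha[OF assms]] by simp
  also have "\<dots> \<subseteq> deg_at_least (alpha I * Suc k)"
    using ideal_mult_deg_at_least[of "alpha I * k" "alpha I"] by (simp add: add.commute)
  finally show ?case .
qed

lemma alpha_witness:
  fixes I :: "('v::finite, 'a::comm_ring_1) mpoly set"
  assumes I: "graded_ideal I" "I \<noteq> {0}"
  obtains g where "g \<in> I" "g \<noteq> 0" "homogeneous_of (alpha I) g"
proof -
  obtain p where p: "p \<in> I" "p \<noteq> 0"
    using I ideal_zero[of I] by (auto simp: graded_ideal_iff)
  then obtain m where m: "m \<in> Poly_Mapping.keys p"
    by fastforce
  have "hcomp (mdeg m) p \<in> I" "hcomp (mdeg m) p \<noteq> 0"
    using graded_ideal_hcomp[OF I(1) p(1)] m by (auto simp: poly_mapping_eq_iff fun_eq_iff in_keys_iff)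
  then have "\<exists>d. \<exists>g\<in>I. g \<noteq> 0 \<and> g \<in> Sdeg d"
    using homogeneous_of_hcomp unfolding Sdeg_def by blast
  then have "\<exists>g\<in>I. g \<noteq> 0 \<and> g \<in> Sdeg (alpha I)"
    unfolding alpha_def by (rule LeastI_ex)
  then show ?thesis
    using that unfolding Sdeg_def by blast
qed

lemma alpha_mult_le_deg_of_prime_colon:
  fixes I :: "('v::finite, 'a::field) mpoly set"
  assumes I: "graded_ideal I" "I \<noteq> {0}" and k: "0 < k"
    and prime: "prime_ideal (colon (ideal_pow I k) f)" and f: "homogeneous_of d f"
  shows "alpha I * k \<le> alpha I + d"
proof -
  define J where "J = ideal_pow I k"
  have J: "is_ideal J"
    unfolding J_def by (rule is_ideal_ideal_pow)
  have "f \<noteq> 0"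
    using prime colon_eq_UNIV_iff[OF J] ideal_zero[OF J] unfolding prime_ideal_def J_def by auto
  obtain g where g: "g \<in> I" "g \<noteq> 0" "homogeneous_of (alpha I) g"
    by (rule alpha_witness[OF I])
  have "g ^ k \<in> colon J f"
    using power_mem_ideal_pow[OF g(1)] ideal_subset_colon[OF J] unfolding J_def by blast
  then have "g \<in> colon J f"
    using prime_ideal_power_mem prime k unfolding J_def by blast
  then have "g * f \<in> J"
    by (simp add: colon_def)
  then have "g * f \<in> deg_at_least (alpha I * k)"
    using ideal_pow_subset_deg_at_least[OF I(1)] unfolding J_def by blast
  moreover obtain m where "m \<in> Poly_Mapping.keys (g * f)"
    using mult_neq_zero[OF g(2) \<open>f \<noteq> 0\<close>] by fastforce
  moreover have "homogeneous_of (alpha I + d) (g * f)"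
    by (rule homogeneous_of_mult[OF g(3) f])
  ultimately show ?thesis
    unfolding deg_at_least_def homogeneous_of_def by auto
qed

lemma alpha_mult_le_vnum:
  fixes I :: "('v::finite, 'a::field) mpoly set"
  assumes I: "graded_ideal I" "I \<noteq> {0}" "I \<noteq> UNIV" and k: "0 < k"
  shows "alpha I * k \<le> alpha I + vnum (ideal_pow I k)"
proof -
  have "ideal_pow I k \<noteq> UNIV"
    using ideal_pow_subset[OF _ k, of I] I by (auto simp: graded_ideal_iff)
  then have "\<exists>d. \<exists>f\<in>Sdeg d. colon (ideal_pow I k) f \<in> Ass (ideal_pow I k)"
    using graded_ideal_homogeneous_associated_prime graded_ideal_pow[OF I(1)] by blast
  then have "\<exists>f\<in>Sdeg (vnum (ideal_pow I k)). colon (ideal_pow I k) f \<in> Ass (ideal_pow I k)"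
    unfolding vnum_def by (rule LeastI_ex)
  then show ?thesis
    using alpha_mult_le_deg_of_prime_colon[OF I(1,2) k] unfolding Sdeg_def Ass_def by blast
qed

theorem lemma4p4:
  fixes I :: "('v::finite, 'a::field) mpoly set"
  assumes "graded_ideal I" and "I \<noteq> {0}" and "I \<noteq> UNIV"
  shows "\<exists>c::int. \<exists>k0. \<forall>k\<ge>k0. int (vnum (ideal_pow I k)) \<ge> int (alpha I) * int k + c"
proof (intro exI[of _ "- int (alpha I)"] exI[of _ 1] allI impI)
  fix k :: nat
  assume "k \<ge> 1"
  then have "alpha I * k \<le> alpha I + vnum (ideal_pow I k)"
    using alpha_mult_le_vnum[OF assms] by simp
  then have "int (alpha I) * int k \<le> int (alpha I) + int (vnum (ideal_pow I k))"
    by (metis of_nat_add of_nat_le_iff of_nat_mult)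
  then show "int (alpha I) * int k + - int (alpha I) \<le> int (vnum (ideal_pow I k))"
    by simp
qed

end
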